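(* Let $N\ge 1$ and $M\ge 1$ be integers and let $\mathcal{N}=(p_1,\ldots,p_N)$ with $p_i>0$ and $\sum_{i=1}^N p_i=1$. Let $X_1,\ldots,X_M$ be independent random variables with values in $\bar N=\{1,\ldots,N\}$ and $\Pr(X_j=i)=p_i$, and let $\Pr(K\mid M,\mathcal{N})$ be the probability that exactly $K$ distinct values occur among $X_1,\ldots,X_M$. For $s\subseteq\bar N$ write $\Pr(s)=\sum_{i\in s}p_i$. Then for every real $t$, \[ \sum_{K=1}^{N}e^{Kt}\Pr(K\mid M,\mathcal{N})=\sum_{k=1}^{N}\ \sum_{\{s\subseteq\bar N:\ |s|=k\}}\Pr(s)^M\, e^{kt}\,(1-e^{t})^{N-k}. \]
   Context: The left-hand side is the moment-generating function of the type-token distribution $\Pr(K\mid M,\mathcal{N})$, $K=1,\ldots,N$. *)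

theory Defs
  imports Complex_Main "HOL-Library.FuncSet"
begin

text \<open>The joint law of (X_1,...,X_M) is the product measure, i.e. the outcome
f : {1..M} -> {1..N} has probability prod_j p (f j).\<close>

definition type_token_prob :: "nat \<Rightarrow> nat \<Rightarrow> (nat \<Rightarrow> real) \<Rightarrow> nat \<Rightarrow> real" where
  "type_token_prob N M p K =
     (\<Sum>f \<in> {1..M} \<rightarrow>\<^sub>E {1..N}.
        if card (f ` {1..M}) = K then (\<Prod>j\<in>{1..M}. p (f j)) else 0)"

end

theory Submission
  imports Defs
begin

lemma sum_power_card_supersets:
  fixes x y :: "'a::comm_semiring_1"
  assumes "finite U" and "A \<subseteq> U"
  shows "(\<Sum>u\<in>{u. A \<subseteq> u \<and> u \<subseteq> U}. x ^ card u * y ^ (card U - card u))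
         = x ^ card A * (x + y) ^ (card U - card A)"
proof -
  define C where "C = U - A"
  have fin_C: "finite C" and fin_A: "finite A"
    using assms finite_subset unfolding C_def by auto
  have card_U: "card U = card A + card C"
    using assms fin_A unfolding C_def by (simp add: card_Diff_subset card_mono)
  have supersets: "{u. A \<subseteq> u \<and> u \<subseteq> U} = (\<lambda>B. A \<union> B) ` Pow C"
    using assms(2) unfolding C_def by (auto intro!: image_eqI[where x = "_ - A"])
  have inj: "inj_on (\<lambda>B. A \<union> B) (Pow C)"
    unfolding inj_on_def C_def by blast
  have "(\<Sum>u\<in>{u. A \<subseteq> u \<and> u \<subseteq> U}. x ^ card u * y ^ (card U - card u))
      = (\<Sum>B\<in>Pow C. x ^ card (A \<union> B) * y ^ (card U - card (A \<union> B)))"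
    unfolding supersets by (simp add: sum.reindex[OF inj])
  also have "\<dots> = (\<Sum>B\<in>Pow C. x ^ card A * ((\<Prod>i\<in>B. x) * (\<Prod>i\<in>C - B. y)))"
  proof (rule sum.cong[OF refl])
    fix B assume "B \<in> Pow C"
    then have "B \<subseteq> C" and "finite B" using fin_C finite_subset by auto
    then have "card (A \<union> B) = card A + card B" and "card (C - B) = card C - card B"
      using fin_A card_Un_disjoint[of A B] card_Diff_subset[of B C] unfolding C_def by auto
    then show "x ^ card (A \<union> B) * y ^ (card U - card (A \<union> B))
        = x ^ card A * ((\<Prod>i\<in>B. x) * (\<Prod>i\<in>C - B. y))"
      using card_U by (simp add: power_add mult.assoc)
  qed
  also have "\<dots> = x ^ card A * (\<Prod>i\<in>C. x + y)"
    by (simp only: prod_add[OF fin_C] sum_distrib_left)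
  also have "\<dots> = x ^ card A * (x + y) ^ (card U - card A)"
    using card_U by simp
  finally show ?thesis .
qed

lemma sum_PiE_restrict:
  assumes "finite I" and "finite U" and "u \<subseteq> U"
  shows "(\<Sum>f\<in>I \<rightarrow>\<^sub>E u. W f) = (\<Sum>f\<in>I \<rightarrow>\<^sub>E U. if f ` I \<subseteq> u then W f else 0)"
proof -
  have "I \<rightarrow>\<^sub>E u = {f \<in> I \<rightarrow>\<^sub>E U. f ` I \<subseteq> u}"
    using assms(3) by (auto simp: PiE_def Pi_def)
  then show ?thesis
    using assms(1,2) by (simp add: sum.inter_filter finite_PiE)
qed

lemma sum_Pow_PiE_eq_sum_power_card_image:
  fixes W :: "('a \<Rightarrow> 'b) \<Rightarrow> 'c::comm_ring_1"
  assumes fin_I: "finite I" and fin_U: "finite U"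
  shows "(\<Sum>u\<in>Pow U. (\<Sum>f\<in>I \<rightarrow>\<^sub>E u. W f) * (x ^ card u * (1 - x) ^ (card U - card u)))
         = (\<Sum>f\<in>I \<rightarrow>\<^sub>E U. W f * x ^ card (f ` I))"
proof -
  have "(\<Sum>u\<in>Pow U. (\<Sum>f\<in>I \<rightarrow>\<^sub>E u. W f) * (x ^ card u * (1 - x) ^ (card U - card u)))
      = (\<Sum>u\<in>Pow U. \<Sum>f\<in>I \<rightarrow>\<^sub>E U.
           if f ` I \<subseteq> u then W f * (x ^ card u * (1 - x) ^ (card U - card u)) else 0)"
  proof (rule sum.cong[OF refl])
    fix u assume "u \<in> Pow U"
    then show "(\<Sum>f\<in>I \<rightarrow>\<^sub>E u. W f) * (x ^ card u * (1 - x) ^ (card U - card u))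
        = (\<Sum>f\<in>I \<rightarrow>\<^sub>E U.
           if f ` I \<subseteq> u then W f * (x ^ card u * (1 - x) ^ (card U - card u)) else 0)"
      using sum_PiE_restrict[OF fin_I fin_U, of u W] by (auto simp: sum_distrib_right intro!: sum.cong)
  qed
  also have "\<dots> = (\<Sum>f\<in>I \<rightarrow>\<^sub>E U. \<Sum>u\<in>Pow U.
           if f ` I \<subseteq> u then W f * (x ^ card u * (1 - x) ^ (card U - card u)) else 0)"
    by (rule sum.swap)
  also have "\<dots> = (\<Sum>f\<in>I \<rightarrow>\<^sub>E U. W f * x ^ card (f ` I))"
  proof (rule sum.cong[OF refl])
    fix f assume "f \<in> I \<rightarrow>\<^sub>E U"
    then have range_f: "f ` I \<subseteq> U" by (auto simp: PiE_def)
    have "{u \<in> Pow U. f ` I \<subseteq> u} = {u. f ` I \<subseteq> u \<and> u \<subseteq> U}" by auto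
    then have "(\<Sum>u\<in>Pow U. if f ` I \<subseteq> u then W f * (x ^ card u * (1 - x) ^ (card U - card u)) else 0)
        = W f * (\<Sum>u\<in>{u. f ` I \<subseteq> u \<and> u \<subseteq> U}. x ^ card u * (1 - x) ^ (card U - card u))"
      using fin_U by (simp add: sum.inter_filter[symmetric] sum_distrib_left)
    also have "\<dots> = W f * x ^ card (f ` I)"
      using sum_power_card_supersets[OF fin_U range_f, of x "1 - x"] by simp
    finally show "(\<Sum>u\<in>Pow U. if f ` I \<subseteq> u then W f * (x ^ card u * (1 - x) ^ (card U - card u)) else 0)
        = W f * x ^ card (f ` I)" .
  qed
  finally show ?thesis .
qed

lemma card_image_PiE_atLeastAtMost:
  fixes M N :: nat
  assumes "M \<ge> 1" and "f \<in> {1..M} \<rightarrow>\<^sub>E {1..N}"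
  shows "card (f ` {1..M}) \<in> {1..N}"
proof -
  have "f ` {1..M} \<subseteq> {1..N}" using assms(2) by (auto simp: PiE_def)
  then have "card (f ` {1..M}) \<le> N" using card_mono[of "{1..N}"] by fastforce
  moreover have "f ` {1..M} \<noteq> {}" using assms(1) by simp
  then have "card (f ` {1..M}) \<ge> 1" by (simp add: Suc_leI card_gt_0_iff)
  ultimately show ?thesis by simp
qed

lemma sum_power_type_token_prob:
  fixes x :: real
  assumes "M \<ge> 1"
  shows "(\<Sum>K=1..N. x ^ K * type_token_prob N M p K)
         = (\<Sum>f\<in>{1..M} \<rightarrow>\<^sub>E {1..N}. (\<Prod>j\<in>{1..M}. p (f j)) * x ^ card (f ` {1..M}))"
proof -
  have "(\<Sum>K=1..N. x ^ K * type_token_prob N M p K)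
      = (\<Sum>f\<in>{1..M} \<rightarrow>\<^sub>E {1..N}. \<Sum>K=1..N.
           if card (f ` {1..M}) = K then (\<Prod>j\<in>{1..M}. p (f j)) * x ^ K else 0)"
    unfolding type_token_prob_def
    by (subst sum.swap) (simp add: sum_distrib_left if_distrib mult.commute cong: if_cong)
  also have "\<dots> = (\<Sum>f\<in>{1..M} \<rightarrow>\<^sub>E {1..N}. (\<Prod>j\<in>{1..M}. p (f j)) * x ^ card (f ` {1..M}))"
    using card_image_PiE_atLeastAtMost[OF assms] by (intro sum.cong) (simp_all add: sum.delta')
  finally show ?thesis .
qed

lemma power_sum_eq_sum_PiE:
  fixes p :: "'a \<Rightarrow> 'b::comm_semiring_1"
  assumes "finite I" and "finite u"
  shows "sum p u ^ card I = (\<Sum>f\<in>I \<rightarrow>\<^sub>E u. \<Prod>j\<in>I. p (f j))"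
  using prod_sum_PiE[of I "\<lambda>_. u" "\<lambda>_. p"] assms by simp

theorem lemma1:
  fixes N M :: nat and p :: "nat \<Rightarrow> real" and t :: real
  assumes "N \<ge> 1" and "M \<ge> 1"
    and "\<forall>i\<in>{1..N}. p i > 0"
    and "(\<Sum>i=1..N. p i) = 1"
  shows "(\<Sum>K=1..N. exp (real K * t) * type_token_prob N M p K) =
         (\<Sum>k=1..N. \<Sum>s\<in>{s. s \<subseteq> {1..N} \<and> card s = k}.
            (sum p s) ^ M * exp (real k * t) * (1 - exp t) ^ (N - k))"
proof -
  define g where "g s = sum p s ^ M * (exp t ^ card s * (1 - exp t) ^ (N - card s))" for s
  have "(\<Sum>k=1..N. \<Sum>s\<in>{s. s \<subseteq> {1..N} \<and> card s = k}.
            (sum p s) ^ M * exp (real k * t) * (1 - exp t) ^ (N - k))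
      = (\<Sum>k=1..N. \<Sum>s\<in>{s \<in> Pow {1..N}. card s = k}. g s)"
    by (simp add: g_def exp_of_nat_mult mult.assoc)
  also have "\<dots> = (\<Sum>k\<in>{0..N}. \<Sum>s\<in>{s \<in> Pow {1..N}. card s = k}. g s)"
  proof -
    have "{s \<in> Pow {1..N}. card s = 0} = {{}}"
      by (auto dest: finite_subset)
    then have "(\<Sum>s\<in>{s \<in> Pow {1..N}. card s = 0}. g s) = 0"
      using \<open>M \<ge> 1\<close> by (simp add: g_def)
    then show ?thesis
      by (simp add: sum.atLeast_Suc_atMost)
  qed
  also have "\<dots> = (\<Sum>s\<in>Pow {1..N}. g s)"
    by (rule sum.group) (auto simp: card_mono[of "{1..N}", simplified])
  also have "\<dots> = (\<Sum>f\<in>{1..M} \<rightarrow>\<^sub>E {1..N}. (\<Prod>j\<in>{1..M}. p (f j)) * exp t ^ card (f ` {1..M}))"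
    using sum_Pow_PiE_eq_sum_power_card_image[of "{1..M}" "{1..N}" "\<lambda>f. \<Prod>j\<in>{1..M}. p (f j)"]
    by (simp add: g_def power_sum_eq_sum_PiE[of "{1..M}", simplified] finite_subset)
  also have "\<dots> = (\<Sum>K=1..N. exp (real K * t) * type_token_prob N M p K)"
    using sum_power_type_token_prob[OF \<open>M \<ge> 1\<close>] by (simp add: exp_of_nat_mult)
  finally show ?thesis ..
qed

end
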